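(* If $G$ is a strongly connected prime tournament, then $G$ is triangle-connected.
   Context: A tournament is a finite, non-null, loopless directed graph in which for any two distinct vertices $u,v$ there is exactly one edge with both ends in $\{u,v\}$; write $u\to v$ for the edge from $u$ to $v$. A homogeneous set of $G$ is a set $X\subseteq V(G)$ such that each $v\in V(G)\setminus X$ either has $v\to x$ for all $x\in X$ or $x\to v$ for all $x\in X$; $G$ is prime if every homogeneous set $X$ satisfies $|X|\le1$ or $X=V(G)$. $G$ is strongly connected if for any two vertices $u,v$ there are directed paths from $u$ to $v$ and from $v$ to $u$. Two cyclic triangles (3-vertex directed cycles) in $G$ are adjacent if they share exactly two vertices; two cyclic triangles $C,C'$ are triangle-connected if there is a sequence $C_1,\dots,C_n$ ($n\ge1$) of cyclic triangles with $C_1=C$, $C_n=C'$, and $C_i$ adjacent to $C_{i+1}$ for all $1\le i\le n-1$. A tournament is triangle-connected if it is strongly connected and any two of its cyclic triangles are triangle-connected. *)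

theory Defs
  imports Main
begin

definition tournament :: "'a set \<Rightarrow> ('a \<Rightarrow> 'a \<Rightarrow> bool) \<Rightarrow> bool" where
  "tournament V E \<longleftrightarrow> finite V \<and> V \<noteq> {} \<and>
     (\<forall>u v. E u v \<longrightarrow> u \<in> V \<and> v \<in> V) \<and>
     (\<forall>v. \<not> E v v) \<and>
     (\<forall>u\<in>V. \<forall>v\<in>V. u \<noteq> v \<longrightarrow> (E u v \<longleftrightarrow> \<not> E v u))"

definition homogeneous :: "'a set \<Rightarrow> ('a \<Rightarrow> 'a \<Rightarrow> bool) \<Rightarrow> 'a set \<Rightarrow> bool" where
  "homogeneous V E X \<longleftrightarrow> X \<subseteq> V \<and>
     (\<forall>v\<in>V - X. (\<forall>x\<in>X. E v x) \<or> (\<forall>x\<in>X. E x v))"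

definition prime_tournament :: "'a set \<Rightarrow> ('a \<Rightarrow> 'a \<Rightarrow> bool) \<Rightarrow> bool" where
  "prime_tournament V E \<longleftrightarrow>
     (\<forall>X. homogeneous V E X \<longrightarrow> card X \<le> 1 \<or> X = V)"

definition strongly_connected :: "'a set \<Rightarrow> ('a \<Rightarrow> 'a \<Rightarrow> bool) \<Rightarrow> bool" where
  "strongly_connected V E \<longleftrightarrow>
     (\<forall>u\<in>V. \<forall>v\<in>V. (\<lambda>x y. x \<in> V \<and> y \<in> V \<and> E x y)\<^sup>*\<^sup>* u v)"

definition cyclic_triangle :: "'a set \<Rightarrow> ('a \<Rightarrow> 'a \<Rightarrow> bool) \<Rightarrow> 'a set \<Rightarrow> bool" where
  "cyclic_triangle V E T \<longleftrightarrow> T \<subseteq> V \<and>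
     (\<exists>a b c. T = {a, b, c} \<and> a \<noteq> b \<and> b \<noteq> c \<and> a \<noteq> c \<and> E a b \<and> E b c \<and> E c a)"

definition adjacent_triangles :: "'a set \<Rightarrow> ('a \<Rightarrow> 'a \<Rightarrow> bool) \<Rightarrow> 'a set \<Rightarrow> 'a set \<Rightarrow> bool" where
  "adjacent_triangles V E C C' \<longleftrightarrow>
     cyclic_triangle V E C \<and> cyclic_triangle V E C' \<and> card (C \<inter> C') = 2"

definition triangle_connected_pair :: "'a set \<Rightarrow> ('a \<Rightarrow> 'a \<Rightarrow> bool) \<Rightarrow> 'a set \<Rightarrow> 'a set \<Rightarrow> bool" where
  "triangle_connected_pair V E C C' \<longleftrightarrow>
     cyclic_triangle V E C \<and> cyclic_triangle V E C' \<and> (adjacent_triangles V E)\<^sup>*\<^sup>* C C'"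

definition triangle_connected :: "'a set \<Rightarrow> ('a \<Rightarrow> 'a \<Rightarrow> bool) \<Rightarrow> bool" where
  "triangle_connected V E \<longleftrightarrow> strongly_connected V E \<and>
     (\<forall>C C'. cyclic_triangle V E C \<longrightarrow> cyclic_triangle V E C' \<longrightarrow>
        triangle_connected_pair V E C C')"

end

(* For a cyclic triangle T0 and a vertex set D, the vertices of the triangles reachable from T0
   by adjacencies inside D form a homogeneous set, provided every other vertex is uniform on each
   of these triangles: adjacent triangles share a vertex, so the orientation towards them cannot
   change along a path. For vertices of D the proviso is automatic: a vertex v that is not uniform
   on a triangle has an edge p -> q of it with q -> v -> p, and {v, p, q} is an adjacent triangle
   inside D. For D = V primeness therefore puts every vertex on a triangle connected to any given
   one, and it remains to connect two triangles {a, x, y} and {a, b, c} through a common vertex.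
   A case analysis on the edges between them either finds a path of at most three adjacencies or
   places one triangle inside the set D of vertices u with y -> u -> x for an edge x -> y of the
   other; the component within this D misses x, so by primeness it must reach a triangle over
   x -> y, and all those triangles are mutually adjacent. *)

theory Submission
  imports Defs
begin

lemma tournament_edge_in_V:
  "tournament V E \<Longrightarrow> E u v \<Longrightarrow> u \<in> V \<and> v \<in> V"
  unfolding tournament_def by blast

lemma tournament_edge_neq: "tournament V E \<Longrightarrow> E u v \<Longrightarrow> u \<noteq> v"
  unfolding tournament_def by blast

lemma tournament_asym:
  assumes "tournament V E" "E u v"
  shows "\<not> E v u"
proof -
  have "u \<in> V" "v \<in> V" "u \<noteq> v"
    using tournament_edge_in_V[OF assms] tournament_edge_neq[OF assms] by auto
  with assms show ?thesis
    unfolding tournament_def by blast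
qed

lemma tournament_total:
  "tournament V E \<Longrightarrow> u \<in> V \<Longrightarrow> v \<in> V \<Longrightarrow> u \<noteq> v \<Longrightarrow> E u v \<or> E v u"
  unfolding tournament_def by blast

lemma cyclic_triangleI:
  assumes "tournament V E" "E a b" "E b c" "E c a"
  shows "cyclic_triangle V E {a, b, c}"
proof -
  have "{a, b, c} \<subseteq> V"
    using tournament_edge_in_V[OF assms(1)] assms(2,3) by blast
  moreover have "a \<noteq> b" "b \<noteq> c" "c \<noteq> a"
    using tournament_edge_neq[OF assms(1)] assms(2-4) by blast+
  ultimately show ?thesis
    unfolding cyclic_triangle_def using assms(2-4) by blast
qed

lemma cyclic_triangle_at_vertex:
  assumes "cyclic_triangle V E T" "a \<in> T"
  obtains x y where "T = {a, x, y}" "E a x" "E x y" "E y a"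
proof -
  from assms(1) obtain a' b' c' where T: "T = {a', b', c'}" "E a' b'" "E b' c'" "E c' a'"
    unfolding cyclic_triangle_def by blast
  with assms(2) consider "a = a'" | "a = b'" | "a = c'" by blast
  then show thesis
  proof cases
    case 1
    show thesis by (rule that[of b' c']) (use T 1 in simp_all)
  next
    case 2
    show thesis by (rule that[of c' a']) (use T 2 in \<open>simp_all add: insert_commute\<close>)
  next
    case 3
    show thesis by (rule that[of a' b']) (use T 3 in \<open>simp_all add: insert_commute\<close>)
  qed
qed

lemma card_cyclic_triangle: "cyclic_triangle V E T \<Longrightarrow> card T = 3"
  unfolding cyclic_triangle_def by auto

lemma adjacent_trianglesI:
  assumes "cyclic_triangle V E S" "cyclic_triangle V E S'" "r \<in> S" "r \<notin> S'"
    and "p \<noteq> q" "{p, q} \<subseteq> S \<inter> S'"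
  shows "adjacent_triangles V E S S'"
proof -
  have card: "card S = 3" "card S' = 3"
    using assms(1,2) by (simp_all add: card_cyclic_triangle)
  then have fin: "finite S" "finite S'"
    by (simp_all add: card_ge_0_finite)
  have "2 \<le> card (S \<inter> S')"
    using card_mono[OF _ assms(6)] fin assms(5) by simp
  moreover have "S \<inter> S' \<subset> S"
    using assms(3,4) by blast
  then have "card (S \<inter> S') < 3"
    using psubset_card_mono[OF fin(1)] card by simp
  ultimately show ?thesis
    using assms(1,2) unfolding adjacent_triangles_def by simp
qed

lemma adjacent_triangles_sym:
  "adjacent_triangles V E S T \<Longrightarrow> adjacent_triangles V E T S"
  unfolding adjacent_triangles_def by (simp add: Int_commute)

lemma triangle_path_sym:
  "(adjacent_triangles V E)\<^sup>*\<^sup>* S T \<Longrightarrow> (adjacent_triangles V E)\<^sup>*\<^sup>* T S"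
  using symp_rtranclp[of "adjacent_triangles V E"]
  by (simp add: sympD sympI adjacent_triangles_sym)

section \<open>Components of triangles inside a vertex set\<close>

definition uniform :: "('a \<Rightarrow> 'a \<Rightarrow> bool) \<Rightarrow> 'a \<Rightarrow> 'a set \<Rightarrow> bool" where
  "uniform E v X \<longleftrightarrow> (\<forall>x\<in>X. E v x) \<or> (\<forall>x\<in>X. E x v)"

lemma homogeneous_iff_uniform:
  "homogeneous V E X \<longleftrightarrow> X \<subseteq> V \<and> (\<forall>v\<in>V - X. uniform E v X)"
  by (simp add: homogeneous_def uniform_def)

lemma adjacent_triangle_at_nonuniform_vertex:
  assumes tour: "tournament V E" and T: "cyclic_triangle V E T"
    and v: "v \<in> V" "v \<notin> T" "\<not> uniform E v T"
  obtains p q where "p \<in> T" "q \<in> T" "E p q" "E q v" "E v p"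
    "adjacent_triangles V E T {v, p, q}"
proof -
  from T obtain a b c where abc: "T = {a, b, c}" "E a b" "E b c" "E c a"
    unfolding cyclic_triangle_def by blast
  have "a \<in> V" "b \<in> V" "c \<in> V"
    using tournament_edge_in_V[OF tour] abc(2,3) by blast+
  then have "E v a \<or> E a v" "E v b \<or> E b v" "E v c \<or> E c v"
    using tournament_total[OF tour v(1)] v(2) abc(1) by blast+
  then obtain p q where pq: "p \<in> T" "q \<in> T" "E p q" "E q v" "E v p"
    using abc v(3) unfolding uniform_def by blast
  have "adjacent_triangles V E {v, p, q} T"
    by (rule adjacent_trianglesI[OF cyclic_triangleI[OF tour pq(5,3,4)] T, where r = v])
      (use v(2) pq(1,2) tournament_edge_neq[OF tour pq(3)] in auto)
  then have "adjacent_triangles V E T {v, p, q}"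
    by (rule adjacent_triangles_sym)
  with pq that show thesis by blast
qed

definition adjacent_within ::
    "'a set \<Rightarrow> ('a \<Rightarrow> 'a \<Rightarrow> bool) \<Rightarrow> 'a set \<Rightarrow> 'a set \<Rightarrow> 'a set \<Rightarrow> bool"
  where "adjacent_within V E D S S' \<longleftrightarrow> adjacent_triangles V E S S' \<and> S \<subseteq> D \<and> S' \<subseteq> D"

definition triangle_component ::
    "'a set \<Rightarrow> ('a \<Rightarrow> 'a \<Rightarrow> bool) \<Rightarrow> 'a set \<Rightarrow> 'a set \<Rightarrow> 'a set"
  where "triangle_component V E D T0 = \<Union>{T. (adjacent_within V E D)\<^sup>*\<^sup>* T0 T}"

lemma adjacent_within_path_triangle:
  assumes "(adjacent_within V E D)\<^sup>*\<^sup>* T0 T" "cyclic_triangle V E T0" "T0 \<subseteq> D"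
  shows "cyclic_triangle V E T" "T \<subseteq> D"
  using assms
  by (induction rule: rtranclp_induct) (auto simp: adjacent_within_def adjacent_triangles_def)

lemma adjacent_within_path_imp_triangle_path:
  "(adjacent_within V E D)\<^sup>*\<^sup>* S T \<Longrightarrow> (adjacent_triangles V E)\<^sup>*\<^sup>* S T"
  by (rule rtranclp_mono[THEN predicate2D, rotated]) (auto simp: adjacent_within_def)

lemma triangle_component_subset:
  assumes "cyclic_triangle V E T0" "T0 \<subseteq> D"
  shows "triangle_component V E D T0 \<subseteq> V \<inter> D"
  using adjacent_within_path_triangle[OF _ assms]
  unfolding triangle_component_def cyclic_triangle_def by blast

lemma uniform_on_component_within:
  assumes tour: "tournament V E" and T0: "cyclic_triangle V E T0" "T0 \<subseteq> D"
    and path: "(adjacent_within V E D)\<^sup>*\<^sup>* T0 T"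
    and v: "v \<in> V" "v \<in> D" "v \<notin> triangle_component V E D T0"
  shows "uniform E v T"
proof (rule ccontr)
  assume "\<not> uniform E v T"
  have T: "cyclic_triangle V E T" "T \<subseteq> D"
    using adjacent_within_path_triangle[OF path T0] by auto
  moreover have "v \<notin> T"
    using v(3) path unfolding triangle_component_def by blast
  ultimately obtain p q where pq: "p \<in> T" "q \<in> T" "adjacent_triangles V E T {v, p, q}"
    using adjacent_triangle_at_nonuniform_vertex[OF tour _ v(1) _ \<open>\<not> uniform E v T\<close>] by metis
  then have "adjacent_within V E D T {v, p, q}"
    using T(2) v(2) unfolding adjacent_within_def by blast
  with path have "(adjacent_within V E D)\<^sup>*\<^sup>* T0 {v, p, q}"
    by (rule rtranclp.rtrancl_into_rtrancl)
  with v(3) show False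
    unfolding triangle_component_def by blast
qed

lemma uniform_Un:
  assumes "tournament V E" "uniform E v A" "uniform E v B" "A \<inter> B \<noteq> {}"
  shows "uniform E v (A \<union> B)"
  using assms(2-4) tournament_asym[OF assms(1)] unfolding uniform_def by blast

lemma triangle_component_homogeneous:
  assumes tour: "tournament V E" and T0: "cyclic_triangle V E T0" "T0 \<subseteq> D"
    and unif: "\<And>v T. v \<in> V \<Longrightarrow> v \<notin> triangle_component V E D T0 \<Longrightarrow>
      (adjacent_within V E D)\<^sup>*\<^sup>* T0 T \<Longrightarrow> uniform E v T"
  shows "homogeneous V E (triangle_component V E D T0)"
  unfolding homogeneous_iff_uniform
proof (intro conjI ballI)
  let ?X = "triangle_component V E D T0"
  show "?X \<subseteq> V"
    using triangle_component_subset[OF T0] by blast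
  fix v assume v: "v \<in> V - ?X"
  have along_path: "uniform E v (T0 \<union> T)" if "(adjacent_within V E D)\<^sup>*\<^sup>* T0 T" for T
    using that
  proof (induction rule: rtranclp_induct)
    case base
    show ?case using unif[of v T0] v by simp
  next
    case (step T1 T2)
    have "T1 \<inter> T2 \<noteq> {}"
      using step(2) unfolding adjacent_within_def adjacent_triangles_def by auto
    then have "uniform E v ((T0 \<union> T1) \<union> T2)"
      using uniform_Un[OF tour step(3) unif] v step(1,2)
      by (blast intro: rtranclp.rtrancl_into_rtrancl)
    then show ?case
      unfolding uniform_def by blast
  qed
  obtain z where z: "z \<in> T0"
    using card_cyclic_triangle[OF T0(1)] by fastforce
  show "uniform E v ?X"
  proof (cases "E v z")
    case True
    then have "\<not> E z v" using tournament_asym[OF tour] by blast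
    with along_path z show ?thesis
      unfolding uniform_def triangle_component_def by blast
  next
    case False
    with along_path z show ?thesis
      unfolding uniform_def triangle_component_def by blast
  qed
qed

lemma prime_triangle_component_eq_V:
  assumes tour: "tournament V E" and prime: "prime_tournament V E"
    and T0: "cyclic_triangle V E T0" "T0 \<subseteq> D"
    and unif: "\<And>v T. v \<in> V \<Longrightarrow> v \<notin> triangle_component V E D T0 \<Longrightarrow>
      (adjacent_within V E D)\<^sup>*\<^sup>* T0 T \<Longrightarrow> uniform E v T"
  shows "triangle_component V E D T0 = V"
proof -
  let ?X = "triangle_component V E D T0"
  have "finite ?X"
    using triangle_component_subset[OF T0] tour finite_subset
    unfolding tournament_def by blast
  moreover have "T0 \<subseteq> ?X"
    unfolding triangle_component_def by blast
  ultimately have "3 \<le> card ?X"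
    using card_mono card_cyclic_triangle[OF T0(1)] by metis
  with prime triangle_component_homogeneous[OF tour T0 unif] show ?thesis
    unfolding prime_tournament_def by force
qed

lemma prime_vertex_on_connected_triangle:
  assumes tour: "tournament V E" and prime: "prime_tournament V E"
    and C: "cyclic_triangle V E C" and a: "a \<in> V"
  obtains T where "cyclic_triangle V E T" "a \<in> T" "(adjacent_triangles V E)\<^sup>*\<^sup>* C T"
proof -
  have CV: "C \<subseteq> V"
    using C unfolding cyclic_triangle_def by blast
  have "triangle_component V E V C = V"
    using prime_triangle_component_eq_V[OF tour prime C CV]
      uniform_on_component_within[OF tour C CV] by blast
  with a obtain T where "(adjacent_within V E V)\<^sup>*\<^sup>* C T" "a \<in> T"
    unfolding triangle_component_def by blast
  with that show thesis
    using adjacent_within_path_triangle[OF _ C CV] adjacent_within_path_imp_triangle_path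
    by blast
qed

section \<open>Connecting triangles through a common vertex\<close>

lemma triangle_path_via_vertex_outside_common_edge:
  assumes tour: "tournament V E" and xy: "E x y"
    and T: "cyclic_triangle V E T" "T \<subseteq> {u. E y u \<and> E u x}"
    and v: "v \<in> V" "\<not> (E y v \<and> E v x)" "v \<notin> T" "\<not> uniform E v T"
  obtains p where "p \<in> T" "(adjacent_triangles V E)\<^sup>*\<^sup>* T {x, y, p}"
proof -
  obtain p q where pq: "p \<in> T" "q \<in> T" "E p q" "E q v" "E v p"
    and adj: "adjacent_triangles V E T {v, p, q}"
    using adjacent_triangle_at_nonuniform_vertex[OF tour T(1) v(1,3,4)] by blast
  have p: "E y p" "E p x" and q: "E y q" "E q x"
    using pq(1,2) T(2) by auto
  have vpq: "cyclic_triangle V E {v, p, q}"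
    using cyclic_triangleI[OF tour pq(5,3,4)] .
  have neq: "v \<noteq> x" "v \<noteq> y" "v \<noteq> p" "v \<noteq> q" "p \<noteq> q" "p \<noteq> x" "p \<noteq> y"
    "q \<noteq> x" "q \<noteq> y"
    using tournament_asym[OF tour] tournament_edge_neq[OF tour] pq(3-5) p q by blast+
  have "x \<in> V" "y \<in> V"
    using tournament_edge_in_V[OF tour xy] by auto
  then consider "E x v" | "E v x" "E v y"
    using tournament_total[OF tour] v(1,2) neq(1,2) by metis
  then show thesis
  proof cases
    case 1
    have xvp: "cyclic_triangle V E {x, v, p}"
      using cyclic_triangleI[OF tour 1 pq(5) p(2)] .
    have "adjacent_triangles V E {v, p, q} {x, v, p}"
      by (rule adjacent_trianglesI[OF vpq xvp, where r = q and p = v and q = p])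
        (use neq in simp_all)
    moreover have "adjacent_triangles V E {x, v, p} {x, y, p}"
      by (rule adjacent_trianglesI[OF xvp cyclic_triangleI[OF tour xy p],
            where r = v and p = x and q = p])
        (use neq in simp_all)
    ultimately have "(adjacent_triangles V E)\<^sup>*\<^sup>* T {x, y, p}"
      using adj by (meson r_into_rtranclp rtranclp.rtrancl_into_rtrancl)
    with pq(1) show thesis by (rule that)
  next
    case 2
    have vyq: "cyclic_triangle V E {v, y, q}"
      using cyclic_triangleI[OF tour 2(2) q(1) pq(4)] .
    have "adjacent_triangles V E {v, p, q} {v, y, q}"
      by (rule adjacent_trianglesI[OF vpq vyq, where r = p and p = v and q = q])
        (use neq in simp_all)
    moreover have "adjacent_triangles V E {v, y, q} {x, y, q}"
      by (rule adjacent_trianglesI[OF vyq cyclic_triangleI[OF tour xy q],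
            where r = v and p = y and q = q])
        (use neq in simp_all)
    ultimately have "(adjacent_triangles V E)\<^sup>*\<^sup>* T {x, y, q}"
      using adj by (meson r_into_rtranclp rtranclp.rtrancl_into_rtrancl)
    with pq(2) show thesis by (rule that)
  qed
qed

lemma triangles_over_common_edge_adjacent:
  assumes tour: "tournament V E" and xy: "E x y"
    and p: "E y p" "E p x" and w: "E y w" "E w x" and "p \<noteq> w"
  shows "adjacent_triangles V E {x, y, p} {x, y, w}"
  by (rule adjacent_trianglesI[OF cyclic_triangleI[OF tour xy p] cyclic_triangleI[OF tour xy w],
        where r = p and p = x and q = y])
    (use \<open>p \<noteq> w\<close> tournament_edge_neq[OF tour xy] tournament_edge_neq[OF tour p(1)]
      tournament_edge_neq[OF tour p(2)] in simp_all)

lemma prime_triangle_path_to_common_edge: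
  assumes tour: "tournament V E" and prime: "prime_tournament V E" and xy: "E x y"
    and T0: "cyclic_triangle V E T0" "T0 \<subseteq> {u. E y u \<and> E u x}"
    and w: "E y w" "E w x"
  shows "(adjacent_triangles V E)\<^sup>*\<^sup>* T0 {x, y, w}"
proof (rule ccontr)
  define D where "D = {u. E y u \<and> E u x}"
  let ?X = "triangle_component V E D T0"
  assume no_path: "\<not> (adjacent_triangles V E)\<^sup>*\<^sup>* T0 {x, y, w}"
  have T0D: "T0 \<subseteq> D"
    using T0(2) unfolding D_def .
  have no_path_via_edge: False
    if "p \<in> D" "(adjacent_triangles V E)\<^sup>*\<^sup>* T0 {x, y, p}" for p
  proof (cases "p = w")
    case True
    with that no_path show False by simp
  next
    case False
    with \<open>p \<in> D\<close> have "adjacent_triangles V E {x, y, p} {x, y, w}"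
      unfolding D_def by (intro triangles_over_common_edge_adjacent[OF tour xy _ _ w]) auto
    with that no_path show False
      by (meson rtranclp.rtrancl_into_rtrancl)
  qed
  have "uniform E v T"
    if v: "v \<in> V" "v \<notin> ?X" and path: "(adjacent_within V E D)\<^sup>*\<^sup>* T0 T" for v T
  proof (cases "v \<in> D")
    case True
    show ?thesis
      by (rule uniform_on_component_within[OF tour T0(1) T0D path v(1) True v(2)])
  next
    case False
    then have v_out: "\<not> (E y v \<and> E v x)"
      unfolding D_def by simp
    show ?thesis
    proof (rule ccontr)
      assume nonuniform: "\<not> uniform E v T"
      have T: "cyclic_triangle V E T" "T \<subseteq> D"
        using adjacent_within_path_triangle[OF path T0(1) T0D] by auto
      have "v \<notin> T"
        using v(2) path unfolding triangle_component_def by blast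
      obtain p where "p \<in> T" and path_Tp: "(adjacent_triangles V E)\<^sup>*\<^sup>* T {x, y, p}"
        by (rule triangle_path_via_vertex_outside_common_edge[OF tour xy T(1) T(2)[unfolded D_def]
              v(1) v_out \<open>v \<notin> T\<close> nonuniform])
      have "(adjacent_triangles V E)\<^sup>*\<^sup>* T0 {x, y, p}"
        using adjacent_within_path_imp_triangle_path[OF path] path_Tp by (rule rtranclp_trans)
      with \<open>p \<in> T\<close> T(2) show False
        by (intro no_path_via_edge) auto
    qed
  qed
  then have "?X = V"
    by (rule prime_triangle_component_eq_V[OF tour prime T0(1) T0D])
  moreover have "x \<in> V" "x \<notin> D"
    using tournament_edge_in_V[OF tour xy] tournament_edge_neq[OF tour] unfolding D_def by auto
  ultimately show False
    using triangle_component_subset[OF T0(1) T0D] by blast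
qed

lemma triangle_path_if_two_common_vertices:
  assumes "cyclic_triangle V E S" "cyclic_triangle V E S'" "p \<noteq> q" "{p, q} \<subseteq> S \<inter> S'"
  shows "(adjacent_triangles V E)\<^sup>*\<^sup>* S S'"
proof (cases "S \<subseteq> S'")
  case True
  have card: "card S = 3" "card S' = 3"
    using assms(1,2) by (simp_all add: card_cyclic_triangle)
  then have "finite S'"
    by (simp add: card_ge_0_finite)
  with True card have "S = S'"
    by (simp add: card_subset_eq)
  then show ?thesis by simp
next
  case False
  then obtain r where "r \<in> S" "r \<notin> S'" by blast
  with assms have "adjacent_triangles V E S S'"
    by (intro adjacent_trianglesI)
  then show ?thesis by (rule r_into_rtranclp)
qed

context
  fixes V :: "'a set" and E :: "'a \<Rightarrow> 'a \<Rightarrow> bool" and a b c x y :: 'a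
  assumes tour: "tournament V E" and prime: "prime_tournament V E"
    and axy: "E a x" "E x y" "E y a" and abc: "E a b" "E b c" "E c a"
    and x_ne_b: "x \<noteq> b" and y_ne_c: "y \<noteq> c"
begin

private lemma distinct_vertices: "distinct [a, b, c, x, y]"
  using tournament_edge_neq[OF tour] tournament_asym[OF tour] axy abc x_ne_b y_ne_c by auto

private lemma vertices_in_V: "b \<in> V" "c \<in> V" "x \<in> V" "y \<in> V"
  using tournament_edge_in_V[OF tour] axy(2) abc(2) by blast+

private lemma triangle_path2:
  "adjacent_triangles V E S1 S2 \<Longrightarrow> adjacent_triangles V E S2 S3 \<Longrightarrow>
    (adjacent_triangles V E)\<^sup>*\<^sup>* S1 S3"
  by (meson r_into_rtranclp rtranclp.rtrancl_into_rtrancl)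

private lemma triangle_path3:
  "adjacent_triangles V E S1 S2 \<Longrightarrow> adjacent_triangles V E S2 S3 \<Longrightarrow>
    adjacent_triangles V E S3 S4 \<Longrightarrow> (adjacent_triangles V E)\<^sup>*\<^sup>* S1 S4"
  by (meson r_into_rtranclp rtranclp.rtrancl_into_rtrancl)

lemma triangle_path_via_xyb:
  assumes cx: "E c x" and yb: "E y b" and bx: "E b x"
  shows "(adjacent_triangles V E)\<^sup>*\<^sup>* {a, x, y} {a, b, c}"
proof -
  note xyb = cyclic_triangleI[OF tour axy(2) yb bx]
  have T_xyb: "adjacent_triangles V E {a, x, y} {x, y, b}"
    by (rule adjacent_trianglesI[OF cyclic_triangleI[OF tour axy] xyb,
          where r = a and p = x and q = y])
      (use distinct_vertices in auto)
  consider "E c y" | "E y c"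
    using tournament_total[OF tour] vertices_in_V y_ne_c by metis
  then show ?thesis
  proof cases
    case 1
    note ybc = cyclic_triangleI[OF tour yb abc(2) 1]
    show ?thesis
    proof (rule triangle_path3[OF T_xyb])
      show "adjacent_triangles V E {x, y, b} {y, b, c}"
        by (rule adjacent_trianglesI[OF xyb ybc, where r = x and p = y and q = b])
          (use distinct_vertices in auto)
      show "adjacent_triangles V E {y, b, c} {a, b, c}"
        by (rule adjacent_trianglesI[OF ybc cyclic_triangleI[OF tour abc],
              where r = y and p = b and q = c])
          (use distinct_vertices in auto)
    qed
  next
    case 2
    have "{a, b, c} \<subseteq> {u. E y u \<and> E u x}"
      using abc axy bx cx yb 2 by auto
    then have "(adjacent_triangles V E)\<^sup>*\<^sup>* {a, b, c} {x, y, a}"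
      by (rule prime_triangle_path_to_common_edge[OF tour prime axy(2)
            cyclic_triangleI[OF tour abc] _ axy(3,1)])
    then show ?thesis
      by (auto simp: insert_commute intro: triangle_path_sym)
  qed
qed

lemma triangle_path_via_cxb:
  assumes cx: "E c x" and yb: "E y b" and xb: "E x b"
  shows "(adjacent_triangles V E)\<^sup>*\<^sup>* {a, x, y} {a, b, c}"
proof -
  note cxb = cyclic_triangleI[OF tour cx xb abc(2)]
  have cxb_C: "adjacent_triangles V E {c, x, b} {a, b, c}"
    by (rule adjacent_trianglesI[OF cxb cyclic_triangleI[OF tour abc],
          where r = x and p = b and q = c])
      (use distinct_vertices in auto)
  consider "E y c" | "E c y"
    using tournament_total[OF tour] vertices_in_V y_ne_c by metis
  then show ?thesis
  proof cases
    case 1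
    note xyc = cyclic_triangleI[OF tour axy(2) 1 cx]
    show ?thesis
    proof (rule triangle_path3[OF _ _ cxb_C])
      show "adjacent_triangles V E {a, x, y} {x, y, c}"
        by (rule adjacent_trianglesI[OF cyclic_triangleI[OF tour axy] xyc,
              where r = a and p = x and q = y])
          (use distinct_vertices in auto)
      show "adjacent_triangles V E {x, y, c} {c, x, b}"
        by (rule adjacent_trianglesI[OF xyc cxb, where r = y and p = c and q = x])
          (use distinct_vertices in auto)
    qed
  next
    case 2
    have "{a, x, y} \<subseteq> {u. E c u \<and> E u b}"
      using abc axy xb cx yb 2 by auto
    then have "(adjacent_triangles V E)\<^sup>*\<^sup>* {a, x, y} {b, c, a}"
      by (rule prime_triangle_path_to_common_edge[OF tour prime abc(2)
            cyclic_triangleI[OF tour axy] _ abc(3,1)])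
    then show ?thesis
      by (simp add: insert_commute)
  qed
qed

lemma triangle_path_of_triangles_meeting_in_vertex:
  "(adjacent_triangles V E)\<^sup>*\<^sup>* {a, x, y} {a, b, c}"
proof -
  note axy_tri = cyclic_triangleI[OF tour axy] and abc_tri = cyclic_triangleI[OF tour abc]
  have "x \<noteq> c" "b \<noteq> y"
    using distinct_vertices by auto
  then consider "E x c" | "E b y" | "E c x" "E y b"
    using tournament_total[OF tour] vertices_in_V by metis
  then show ?thesis
  proof cases
    case 1
    note axc = cyclic_triangleI[OF tour axy(1) 1 abc(3)]
    show ?thesis
    proof (rule triangle_path2)
      show "adjacent_triangles V E {a, x, y} {a, x, c}"
        by (rule adjacent_trianglesI[OF axy_tri axc, where r = y and p = a and q = x])
          (use distinct_vertices in auto)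
      show "adjacent_triangles V E {a, x, c} {a, b, c}"
        by (rule adjacent_trianglesI[OF axc abc_tri, where r = x and p = c and q = a])
          (use distinct_vertices in auto)
    qed
  next
    case 2
    note aby = cyclic_triangleI[OF tour abc(1) 2 axy(3)]
    show ?thesis
    proof (rule triangle_path2)
      show "adjacent_triangles V E {a, x, y} {a, b, y}"
        by (rule adjacent_trianglesI[OF axy_tri aby, where r = x and p = y and q = a])
          (use distinct_vertices in auto)
      show "adjacent_triangles V E {a, b, y} {a, b, c}"
        by (rule adjacent_trianglesI[OF aby abc_tri, where r = y and p = a and q = b])
          (use distinct_vertices in auto)
    qed
  next
    case 3
    have "b \<noteq> x"
      using distinct_vertices by auto
    then consider "E b x" | "E x b"
      using tournament_total[OF tour] vertices_in_V by metis
    then show ?thesis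
    proof cases
      case 1
      with 3 show ?thesis by (rule triangle_path_via_xyb)
    next
      case 2
      with 3 show ?thesis by (rule triangle_path_via_cxb)
    qed
  qed
qed

end

lemma prime_triangles_sharing_vertex_connected:
  assumes tour: "tournament V E" and prime: "prime_tournament V E"
    and T: "cyclic_triangle V E T" "a \<in> T" and C: "cyclic_triangle V E C" "a \<in> C"
  shows "(adjacent_triangles V E)\<^sup>*\<^sup>* T C"
proof -
  obtain x y where axy: "T = {a, x, y}" "E a x" "E x y" "E y a"
    using cyclic_triangle_at_vertex[OF T] by blast
  obtain b c where abc: "C = {a, b, c}" "E a b" "E b c" "E c a"
    using cyclic_triangle_at_vertex[OF C] by blast
  have "b \<noteq> a" "c \<noteq> a"
    using tournament_edge_neq[OF tour] abc(2,4) by blast+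
  consider (xb) "x = b" | (yc) "y = c" | (apart) "x \<noteq> b" "y \<noteq> c"
    by blast
  then show ?thesis
  proof cases
    case xb
    then have "{b, a} \<subseteq> T \<inter> C"
      by (simp add: axy(1) abc(1))
    with \<open>b \<noteq> a\<close> show ?thesis
      by (rule triangle_path_if_two_common_vertices[OF T(1) C(1)])
  next
    case yc
    then have "{c, a} \<subseteq> T \<inter> C"
      by (simp add: axy(1) abc(1))
    with \<open>c \<noteq> a\<close> show ?thesis
      by (rule triangle_path_if_two_common_vertices[OF T(1) C(1)])
  next
    case apart
    then show ?thesis
      using triangle_path_of_triangles_meeting_in_vertex[OF tour prime axy(2-4) abc(2-4)]
        axy(1) abc(1)
      by simp
  qed
qed

theorem theorem4p1:
  fixes V :: "'a set" and E :: "'a \<Rightarrow> 'a \<Rightarrow> bool"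
  assumes "tournament V E"
    and "strongly_connected V E"
    and "prime_tournament V E"
  shows "triangle_connected V E"
proof -
  have "(adjacent_triangles V E)\<^sup>*\<^sup>* C C'"
    if C: "cyclic_triangle V E C" and C': "cyclic_triangle V E C'" for C C'
  proof -
    obtain a where a: "a \<in> C'"
      using card_cyclic_triangle[OF C'] by fastforce
    then have "a \<in> V"
      using C' unfolding cyclic_triangle_def by blast
    then obtain T where T: "cyclic_triangle V E T" "a \<in> T"
      and path_CT: "(adjacent_triangles V E)\<^sup>*\<^sup>* C T"
      using prime_vertex_on_connected_triangle[OF assms(1,3) C] by blast
    have "(adjacent_triangles V E)\<^sup>*\<^sup>* T C'"
      using prime_triangles_sharing_vertex_connected[OF assms(1,3) T C' a] .
    with path_CT show ?thesis
      by (rule rtranclp_trans)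
  qed
  with assms(2) show ?thesis
    unfolding triangle_connected_def triangle_connected_pair_def by blast
qed

end
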